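(* Let $\mathcal{G}=(\mathcal{V},\mathcal{E})$ be connected, $c\in\mathbb{R}^n$, $\bar c=\frac1n\sum_ic_i$, and $\epsilon>0$. Set $x^0=c$ and for $t\ge0$ choose $e=(i,j)\in\mathcal{E}$ uniformly at random (independently across iterations) and set $x^{t+1}=x^t$ except: if $x_i^t\le x_j^t-\epsilon$ then $x_i^{t+1}=x_i^t+\epsilon/2$, $x_j^{t+1}=x_j^t-\epsilon/2$; if $x_j^t\le x_i^t-\epsilon$ then $x_i^{t+1}=x_i^t-\epsilon/2$, $x_j^{t+1}=x_j^t+\epsilon/2$. Let $\Delta^t(\epsilon)=\frac1m\big|\{(i,j)\in\mathcal{E}:|x_i^t-x_j^t|\ge\epsilon\}\big|$ and $\delta^k(\epsilon)=\frac1k\sum_{t=0}^{k-1}\mathbb{E}[\Delta^t(\epsilon)]$. Then for all $k\ge1$ $$\delta^k(\epsilon)\le\frac{2\|c-\bar c\mathbf{1}\|^2}{k\epsilon^2}.$$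
   Context: $\mathcal{G}$ is an undirected graph with vertices $\mathcal{V}=\{1,\dots,n\}$ and $m=|\mathcal{E}|$ edges, each edge $e=(i,j)$ having an arbitrary but fixed orientation. $\mathbf{1}$ is the all-ones vector and $\|\cdot\|$ the Euclidean norm. (The bound $2\|c-\bar c\mathbf 1\|^2$ equals $4(D(y^* )-D(y^0))$ for the dual function $D(y)=-(\mathbf{A}c)^\top y-\tfrac12\|\mathbf{A}^\top y\|^2$ with $y^0=0$, $\mathbf{A}$ the edge–vertex incidence matrix.) *)

theory Defs
  imports "HOL-Probability.Probability"
begin

text \<open>Vertices are 1..n; edges are ordered pairs (i,j) carrying the fixed orientation.\<close>

definition simple_oriented_graph :: "nat \<Rightarrow> (nat \<times> nat) set \<Rightarrow> bool" where
  "simple_oriented_graph n E \<longleftrightarrow>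
     E \<subseteq> {1..n} \<times> {1..n} \<and> (\<forall>(i,j)\<in>E. i \<noteq> j \<and> (j,i) \<notin> E)"

definition connected_graph :: "nat \<Rightarrow> (nat \<times> nat) set \<Rightarrow> bool" where
  "connected_graph n E \<longleftrightarrow>
     (\<forall>i\<in>{1..n}. \<forall>j\<in>{1..n}. (i,j) \<in> (E \<union> E\<inverse>)\<^sup>*)"

definition qstep :: "real \<Rightarrow> nat \<times> nat \<Rightarrow> (nat \<Rightarrow> real) \<Rightarrow> (nat \<Rightarrow> real)" where
  "qstep \<epsilon> e x = (case e of (i,j) \<Rightarrow>
     if x i \<le> x j - \<epsilon> then x(i := x i + \<epsilon>/2, j := x j - \<epsilon>/2)
     else if x j \<le> x i - \<epsilon> then x(i := x i - \<epsilon>/2, j := x j + \<epsilon>/2)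
     else x)"

primrec traj :: "(nat \<times> nat) set \<Rightarrow> real \<Rightarrow> (nat \<Rightarrow> real) \<Rightarrow> nat \<Rightarrow> (nat \<Rightarrow> real) pmf" where
  "traj E \<epsilon> c 0 = return_pmf c"
| "traj E \<epsilon> c (Suc t) = bind_pmf (traj E \<epsilon> c t) (\<lambda>x. map_pmf (\<lambda>e. qstep \<epsilon> e x) (pmf_of_set E))"

definition Delta :: "(nat \<times> nat) set \<Rightarrow> real \<Rightarrow> (nat \<Rightarrow> real) \<Rightarrow> real" where
  "Delta E \<epsilon> x = real (card {(i,j)\<in>E. \<bar>x i - x j\<bar> \<ge> \<epsilon>}) / real (card E)"

definition delta :: "(nat \<times> nat) set \<Rightarrow> real \<Rightarrow> (nat \<Rightarrow> real) \<Rightarrow> nat \<Rightarrow> real" where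
  "delta E \<epsilon> c k = (1 / real k) * (\<Sum>t<k. measure_pmf.expectation (traj E \<epsilon> c t) (Delta E \<epsilon>))"

end

theory Submission
  imports Defs
begin

text \<open>The squared deviation of the state from the mean of \<open>c\<close> is a potential: an effective
  update moves \<open>\<epsilon>/2\<close> across a gap of at least \<open>\<epsilon>\<close> and lowers it by at least \<open>\<epsilon>\<^sup>2/2\<close>, an idle
  update leaves it unchanged. So its expected one-step decrease is at least \<open>\<epsilon>\<^sup>2/2\<close> times the
  expected fraction of edges with gap \<open>\<ge> \<epsilon>\<close>; summing over \<open>t < k\<close> and using that the potential
  stays nonnegative bounds \<open>\<epsilon>\<^sup>2/2 \<cdot> k \<cdot> \<delta>\<^sup>k(\<epsilon>)\<close> by its initial value.\<close>

definition sq_deviation :: "'a set \<Rightarrow> real \<Rightarrow> ('a \<Rightarrow> real) \<Rightarrow> real" where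
  "sq_deviation V m x = (\<Sum>i\<in>V. (x i - m)\<^sup>2)"

lemma sq_deviation_nonneg: "sq_deviation V m x \<ge> 0"
  unfolding sq_deviation_def by (intro sum_nonneg) simp

lemma sum_fun_upd2:
  fixes h :: "'b \<Rightarrow> 'c::ab_group_add"
  assumes "finite S" "i \<in> S" "j \<in> S" "i \<noteq> j"
  shows "(\<Sum>k\<in>S. h ((x(i := a, j := b)) k)) = (\<Sum>k\<in>S. h (x k)) - h (x i) - h (x j) + h a + h b"
proof -
  have "(\<Sum>k\<in>S. h ((x(i := a, j := b)) k))
      = (\<Sum>k\<in>S. h (x k) + (if k = i then h a - h (x i) else 0) + (if k = j then h b - h (x j) else 0))"
    using assms(4) by (intro sum.cong) auto
  also have "\<dots> = (\<Sum>k\<in>S. h (x k)) - h (x i) - h (x j) + h a + h b"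
    using assms by (simp add: sum.distrib)
  finally show ?thesis .
qed

lemma sq_exchange_le:
  fixes a b m \<epsilon> :: real
  assumes "\<epsilon> > 0" "a \<le> b - \<epsilon>"
  shows "(a + \<epsilon>/2 - m)\<^sup>2 + (b - \<epsilon>/2 - m)\<^sup>2 + \<epsilon>\<^sup>2/2 \<le> (a - m)\<^sup>2 + (b - m)\<^sup>2"
proof -
  have "\<epsilon> * (a - b) \<le> \<epsilon> * (-\<epsilon>)"
    using assms by (intro mult_left_mono) auto
  then show ?thesis by (simp add: power2_eq_square algebra_simps)
qed

lemma sq_deviation_qstep_le:
  assumes "finite V" "i \<in> V" "j \<in> V" "i \<noteq> j" "\<epsilon> > 0"
  shows "sq_deviation V m (qstep \<epsilon> (i, j) x) + \<epsilon>\<^sup>2/2 * of_bool (\<epsilon> \<le> \<bar>x i - x j\<bar>)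
         \<le> sq_deviation V m x"
proof -
  have upd: "sq_deviation V m (x(i := a, j := b))
      = sq_deviation V m x - (x i - m)\<^sup>2 - (x j - m)\<^sup>2 + (a - m)\<^sup>2 + (b - m)\<^sup>2" for a b
    unfolding sq_deviation_def by (rule sum_fun_upd2[OF assms(1-4)])
  consider (up) "x i \<le> x j - \<epsilon>" | (down) "\<not> x i \<le> x j - \<epsilon>" "x j \<le> x i - \<epsilon>"
    | (idle) "\<not> x i \<le> x j - \<epsilon>" "\<not> x j \<le> x i - \<epsilon>" by blast
  then show ?thesis
  proof cases
    case up
    then have "\<epsilon> \<le> \<bar>x i - x j\<bar>" by simp
    with up show ?thesis
      using sq_exchange_le[OF assms(5) up, of m] by (simp add: qstep_def upd)
  next
    case down
    then have "\<epsilon> \<le> \<bar>x i - x j\<bar>" by simp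
    with down show ?thesis
      using sq_exchange_le[OF assms(5) down(2), of m] by (simp add: qstep_def upd)
  next
    case idle
    then show ?thesis by (simp add: qstep_def)
  qed
qed

lemma expectation_bind_pmf_drift:
  fixes p :: "'a pmf" and q :: "'a \<Rightarrow> 'a pmf" and f g :: "'a \<Rightarrow> real"
  assumes fin: "finite (set_pmf p)" and fin_q: "\<And>x. x \<in> set_pmf p \<Longrightarrow> finite (set_pmf (q x))"
    and drift: "\<And>x. x \<in> set_pmf p \<Longrightarrow> measure_pmf.expectation (q x) f + g x \<le> f x"
  shows "measure_pmf.expectation (bind_pmf p q) f + measure_pmf.expectation p g
         \<le> measure_pmf.expectation p f"
proof -
  have int: "integrable (measure_pmf p) h" for h :: "'a \<Rightarrow> real"
    using fin by (rule integrable_measure_pmf_finite)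
  have "measure_pmf.expectation (bind_pmf p q) f
      = (\<Sum>a\<in>set_pmf p. pmf p a * measure_pmf.expectation (q a) f)"
    using pmf_expectation_bind[of "set_pmf p" q p f] fin fin_q by simp
  also have "\<dots> = measure_pmf.expectation p (\<lambda>a. measure_pmf.expectation (q a) f)"
    using integral_measure_pmf[OF fin, of p "\<lambda>a. measure_pmf.expectation (q a) f"] by simp
  finally have "measure_pmf.expectation (bind_pmf p q) f + measure_pmf.expectation p g
      = measure_pmf.expectation p (\<lambda>a. measure_pmf.expectation (q a) f + g a)"
    by (simp add: int)
  also have "\<dots> \<le> measure_pmf.expectation p f"
    by (intro integral_mono_AE int AE_pmfI drift)
  finally show ?thesis .
qed

lemma Delta_eq_expectation:
  assumes "finite E" "E \<noteq> {}"
  shows "Delta E \<epsilon> x = measure_pmf.expectation (pmf_of_set E) (\<lambda>(i, j). of_bool (\<epsilon> \<le> \<bar>x i - x j\<bar>))"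
proof -
  have "{(i, j)\<in>E. \<bar>x i - x j\<bar> \<ge> \<epsilon>} = E \<inter> {(i, j). \<epsilon> \<le> \<bar>x i - x j\<bar>}" by auto
  then show ?thesis
    using assms by (simp add: Delta_def integral_pmf_of_set case_prod_unfold)
qed

lemma expected_sq_deviation_qstep_le:
  assumes "finite V" "E \<subseteq> V \<times> V" "\<And>i j. (i, j) \<in> E \<Longrightarrow> i \<noteq> j" "E \<noteq> {}" "\<epsilon> > 0"
  shows "measure_pmf.expectation (map_pmf (\<lambda>e. qstep \<epsilon> e x) (pmf_of_set E)) (sq_deviation V m)
         + \<epsilon>\<^sup>2/2 * Delta E \<epsilon> x \<le> sq_deviation V m x"
proof -
  have fin: "finite E" using assms(1,2) finite_SigmaI finite_subset by blast
  have int: "integrable (measure_pmf (pmf_of_set E)) h" for h :: "nat \<times> nat \<Rightarrow> real"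
    using fin assms(4) by (intro integrable_measure_pmf_finite) simp
  have "measure_pmf.expectation (map_pmf (\<lambda>e. qstep \<epsilon> e x) (pmf_of_set E)) (sq_deviation V m)
        + \<epsilon>\<^sup>2/2 * Delta E \<epsilon> x
      = measure_pmf.expectation (pmf_of_set E)
          (\<lambda>(i, j). sq_deviation V m (qstep \<epsilon> (i, j) x) + \<epsilon>\<^sup>2/2 * of_bool (\<epsilon> \<le> \<bar>x i - x j\<bar>))"
    using fin assms(4) by (simp add: Delta_eq_expectation int case_prod_unfold)
  also have "\<dots> \<le> sq_deviation V m x"
  proof (intro measure_pmf.integral_le_const int AE_pmfI)
    fix e assume "e \<in> set_pmf (pmf_of_set E)"
    with fin assms(4) obtain i j where e: "e = (i, j)" and ij: "(i, j) \<in> E" by (cases e) auto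
    have "i \<in> V" "j \<in> V" "i \<noteq> j" using ij assms(2,3) by auto
    then show "(case e of (i, j) \<Rightarrow> sq_deviation V m (qstep \<epsilon> (i, j) x)
        + \<epsilon>\<^sup>2/2 * of_bool (\<epsilon> \<le> \<bar>x i - x j\<bar>)) \<le> sq_deviation V m x"
      using sq_deviation_qstep_le[OF assms(1) _ _ _ assms(5)] e by simp
  qed
  finally show ?thesis .
qed

lemma finite_set_pmf_traj:
  assumes "finite E" "E \<noteq> {}"
  shows "finite (set_pmf (traj E \<epsilon> c t))"
  by (induction t) (use assms in simp_all)

lemma expected_sq_deviation_traj_le:
  assumes "finite V" "E \<subseteq> V \<times> V" "\<And>i j. (i, j) \<in> E \<Longrightarrow> i \<noteq> j" "E \<noteq> {}" "\<epsilon> > 0"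
  shows "measure_pmf.expectation (traj E \<epsilon> c k) (sq_deviation V m)
         + \<epsilon>\<^sup>2/2 * (\<Sum>t<k. measure_pmf.expectation (traj E \<epsilon> c t) (Delta E \<epsilon>))
         \<le> sq_deviation V m c"
proof (induction k)
  case 0
  then show ?case by simp
next
  case (Suc k)
  have fin: "finite E" using assms(1,2) finite_SigmaI finite_subset by blast
  have "measure_pmf.expectation (traj E \<epsilon> c (Suc k)) (sq_deviation V m)
        + \<epsilon>\<^sup>2/2 * measure_pmf.expectation (traj E \<epsilon> c k) (Delta E \<epsilon>)
      \<le> measure_pmf.expectation (traj E \<epsilon> c k) (sq_deviation V m)"
    using expectation_bind_pmf_drift[where g = "\<lambda>x. \<epsilon>\<^sup>2/2 * Delta E \<epsilon> x"]
      finite_set_pmf_traj[OF fin assms(4)] expected_sq_deviation_qstep_le[OF assms] fin assms(4)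
    by simp
  with Suc.IH show ?case by (simp add: algebra_simps)
qed

theorem mainTheorem20:
  fixes n :: nat and E :: "(nat \<times> nat) set" and c :: "nat \<Rightarrow> real" and \<epsilon> :: real and k :: nat
  assumes "simple_oriented_graph n E" and "connected_graph n E" and "E \<noteq> {}"
    and "\<epsilon> > 0" and "k \<ge> 1"
  shows "delta E \<epsilon> c k \<le>
    2 * (\<Sum>i\<in>{1..n}. (c i - (\<Sum>j\<in>{1..n}. c j) / real n)\<^sup>2) / (real k * \<epsilon>\<^sup>2)"
proof -
  define m where "m = (\<Sum>j\<in>{1..n}. c j) / real n"
  define s where "s = (\<Sum>t<k. measure_pmf.expectation (traj E \<epsilon> c t) (Delta E \<epsilon>))"
  have "E \<subseteq> {1..n} \<times> {1..n}" "\<And>i j. (i, j) \<in> E \<Longrightarrow> i \<noteq> j"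
    using assms(1) unfolding simple_oriented_graph_def by auto
  then have "measure_pmf.expectation (traj E \<epsilon> c k) (sq_deviation {1..n} m) + \<epsilon>\<^sup>2/2 * s
      \<le> sq_deviation {1..n} m c"
    unfolding s_def using expected_sq_deviation_traj_le assms(3,4) by blast
  moreover have "measure_pmf.expectation (traj E \<epsilon> c k) (sq_deviation {1..n} m) \<ge> 0"
    by (intro integral_nonneg_AE) (simp add: sq_deviation_nonneg)
  ultimately have "\<epsilon>\<^sup>2/2 * s \<le> sq_deviation {1..n} m c" by linarith
  then have "s / real k \<le> 2 * sq_deviation {1..n} m c / (real k * \<epsilon>\<^sup>2)"
    using assms(4,5) by (simp add: field_simps)
  then show ?thesis unfolding delta_def s_def sq_deviation_def m_def by simp
qed

end
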